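(* Let $\mathbf{T}\in\{0,1\}^{n\times\ell}$ be a matrix consisting of $\ell\ge 14$ dirty columns with $\delta(\mathbf{T})=3$. Then there is a permutation of the rows of $\mathbf{T}$ such that the resulting matrix $\mathbf{T}'$ satisfies $|\mathcal{T}'_3|\ge 5$.
   Context: A column of a binary matrix is dirty if it contains both $0$ and $1$. For rows $u,w\in\{0,1\}^\ell$, $D(u,w)=\{j:u[j]\ne w[j]\}$ and $d(u,w)=|D(u,w)|$; $\delta(\mathbf{T})=\max_{i\ne i'}d(\mathbf{T}[i],\mathbf{T}[i'])$. For a matrix $\mathbf{T}'$ with $n$ rows $\mathbf{T}'[1],\dots,\mathbf{T}'[n]$, $\mathcal{T}'_3$ is the set system (without duplicates) $\{D(\mathbf{T}'[i],\mathbf{T}'[n]): i\in[n-1],\ d(\mathbf{T}'[i],\mathbf{T}'[n])=3\}$. *)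

theory Defs
  imports "HOL-Combinatorics.Permutations"
begin

text \<open>A binary n x l matrix is a function T :: nat => nat => bool; rows are
  indexed by {0..<n} (row n-1 is the last row), columns by {0..<l}.\<close>

definition Dset :: "(nat \<Rightarrow> nat \<Rightarrow> bool) \<Rightarrow> nat \<Rightarrow> nat \<Rightarrow> nat \<Rightarrow> nat set" where
  "Dset T l i i' = {j \<in> {0..<l}. T i j \<noteq> T i' j}"

definition dist_rows :: "(nat \<Rightarrow> nat \<Rightarrow> bool) \<Rightarrow> nat \<Rightarrow> nat \<Rightarrow> nat \<Rightarrow> nat" where
  "dist_rows T l i i' = card (Dset T l i i')"

definition dirty_col :: "(nat \<Rightarrow> nat \<Rightarrow> bool) \<Rightarrow> nat \<Rightarrow> nat \<Rightarrow> bool" where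
  "dirty_col T n j \<longleftrightarrow> (\<exists>i<n. \<exists>i'<n. T i j \<noteq> T i' j)"

definition delta :: "(nat \<Rightarrow> nat \<Rightarrow> bool) \<Rightarrow> nat \<Rightarrow> nat \<Rightarrow> nat" where
  "delta T n l = Max {dist_rows T l i i' | i i'. i < n \<and> i' < n \<and> i \<noteq> i'}"

definition T3 :: "(nat \<Rightarrow> nat \<Rightarrow> bool) \<Rightarrow> nat \<Rightarrow> nat \<Rightarrow> nat set set" where
  "T3 T n l = {Dset T l i (n - 1) | i. i < n - 1 \<and> dist_rows T l i (n - 1) = 3}"

end

theory Submission
  imports Defs
begin

text \<open>Take rows v, w at distance 3 and put P = D(v, w). For every row x the sets
  D(x, v) and D(x, w) agree outside P, and d(x, v) + d(x, w) = 2 |D(x, v) - P| + 3.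
  As both distances are at most 3, D(x, v) - P has at most one element, and if it
  is non-empty one of the two distances is 3. Every one of the at least 11 columns
  outside P is dirty, so it is the unique column outside P of some member of the
  distance-3 set system of v or of w. These two systems thus have at least 11
  members together, one of them at least 6, and moving its reference row to the
  bottom gives the permutation.\<close>

lemma card_add_card_sym_diff:
  assumes "finite A" "finite B"
  shows "card A + card ((A - B) \<union> (B - A)) = 2 * card (A - B) + card B"
proof -
  have "card ((A - B) \<union> (B - A)) = card (A - B) + card (B - A)"
    using assms by (intro card_Un_disjoint) auto
  then show ?thesis
    using card_Int_Diff[OF assms(1), of B] card_Int_Diff[OF assms(2), of A]
    by (simp add: Int_commute)
qed

lemma finite_Dset: "finite (Dset T l i i')"
  unfolding Dset_def by simp

lemma Dset_self: "Dset T l i i = {}"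
  unfolding Dset_def by simp

lemma Dset_Diff_Dset_eq: "Dset T l x v - Dset T l v w = Dset T l x w - Dset T l v w"
  unfolding Dset_def by auto

lemma Dset_sym_diff:
  "Dset T l x w = (Dset T l x v - Dset T l v w) \<union> (Dset T l v w - Dset T l x v)"
  unfolding Dset_def by auto

lemma dist_rows_add_dist_rows:
  "dist_rows T l x v + dist_rows T l x w
     = 2 * card (Dset T l x v - Dset T l v w) + dist_rows T l v w"
  unfolding dist_rows_def Dset_sym_diff[of T l x w v]
  by (rule card_add_card_sym_diff) (simp_all add: finite_Dset)

lemma finite_dist_rows_pairs:
  "finite {dist_rows T l i i' | i i'. i < n \<and> i' < n \<and> i \<noteq> i'}"
proof (rule finite_subset)
  show "{dist_rows T l i i' | i i'. i < n \<and> i' < n \<and> i \<noteq> i'}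
          \<subseteq> (\<lambda>(i, i'). dist_rows T l i i') ` ({0..<n} \<times> {0..<n})"
    by auto
qed simp

lemma dist_rows_le_delta:
  assumes "i < n" "i' < n"
  shows "dist_rows T l i i' \<le> delta T n l"
proof (cases "i = i'")
  case True
  then show ?thesis
    by (simp add: dist_rows_def Dset_self)
next
  case False
  then show ?thesis
    unfolding delta_def using assms finite_dist_rows_pairs by (intro Max_ge) auto
qed

lemma delta_attained:
  assumes "i < n" "i' < n" "i \<noteq> i'"
  obtains v w where "v < n" "w < n" "dist_rows T l v w = delta T n l"
proof -
  have "delta T n l \<in> {dist_rows T l i i' | i i'. i < n \<and> i' < n \<and> i \<noteq> i'}"
    unfolding delta_def using finite_dist_rows_pairs assms by (intro Max_in) auto
  then show ?thesis
    using that by auto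
qed

definition T3_wrt :: "(nat \<Rightarrow> nat \<Rightarrow> bool) \<Rightarrow> nat \<Rightarrow> nat \<Rightarrow> nat \<Rightarrow> nat set set" where
  "T3_wrt T n l u = {Dset T l i u | i. i < n \<and> i \<noteq> u \<and> dist_rows T l i u = 3}"

lemma finite_T3_wrt: "finite (T3_wrt T n l u)"
proof (rule finite_subset)
  show "T3_wrt T n l u \<subseteq> Pow {0..<l}"
    unfolding T3_wrt_def Dset_def by auto
qed simp

lemma T3_eq_T3_wrt_last: "T3 T n l = T3_wrt T n l (n - 1)"
proof -
  have "i < n - 1 \<longleftrightarrow> i < n \<and> i \<noteq> n - 1" for i
    by auto
  then show ?thesis
    unfolding T3_def T3_wrt_def by simp
qed

lemma T3_wrt_permute:
  assumes "\<sigma> permutes {0..<n}"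
  shows "T3_wrt (\<lambda>i. T (\<sigma> i)) n l u = T3_wrt T n l (\<sigma> u)"
proof -
  have Dset_permute: "Dset (\<lambda>i. T (\<sigma> i)) l i u = Dset T l (\<sigma> i) (\<sigma> u)" for i
    unfolding Dset_def by simp
  have less_n: "\<sigma> i < n \<longleftrightarrow> i < n" for i
    using permutes_in_image[OF assms] by simp
  have eq_iff: "\<sigma> i = \<sigma> u \<longleftrightarrow> i = u" for i
    using permutes_inj[OF assms] by (auto dest: injD)
  show ?thesis
  proof (intro equalityI subsetI)
    fix D
    assume "D \<in> T3_wrt (\<lambda>i. T (\<sigma> i)) n l u"
    then obtain i where "i < n" "i \<noteq> u" "dist_rows T l (\<sigma> i) (\<sigma> u) = 3"
        "D = Dset T l (\<sigma> i) (\<sigma> u)"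
      unfolding T3_wrt_def dist_rows_def Dset_permute by blast
    then show "D \<in> T3_wrt T n l (\<sigma> u)"
      unfolding T3_wrt_def using less_n eq_iff by blast
  next
    fix D
    assume "D \<in> T3_wrt T n l (\<sigma> u)"
    then obtain i where "i < n" "i \<noteq> \<sigma> u" "dist_rows T l i (\<sigma> u) = 3"
        "D = Dset T l i (\<sigma> u)"
      unfolding T3_wrt_def by blast
    moreover have "\<sigma> (inv \<sigma> i) = i"
      by (rule permutes_inverses[OF assms])
    ultimately have "inv \<sigma> i < n" "inv \<sigma> i \<noteq> u"
        "dist_rows T l (\<sigma> (inv \<sigma> i)) (\<sigma> u) = 3" "D = Dset T l (\<sigma> (inv \<sigma> i)) (\<sigma> u)"
      using less_n[of "inv \<sigma> i"] by auto
    then show "D \<in> T3_wrt (\<lambda>i. T (\<sigma> i)) n l u"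
      unfolding T3_wrt_def dist_rows_def Dset_permute by blast
  qed
qed

lemma exists_permutation_T3_eq_T3_wrt:
  assumes "u < n"
  obtains \<sigma> where "\<sigma> permutes {0..<n}" "T3 (\<lambda>i. T (\<sigma> i)) n l = T3_wrt T n l u"
proof
  show \<sigma>: "transpose u (n - 1) permutes {0..<n}"
    using assms by (intro permutes_swap_id) auto
  show "T3 (\<lambda>i. T (transpose u (n - 1) i)) n l = T3_wrt T n l u"
    unfolding T3_eq_T3_wrt_last T3_wrt_permute[OF \<sigma>] by simp
qed

context
  fixes T :: "nat \<Rightarrow> nat \<Rightarrow> bool" and n l v w :: nat
  assumes dist_le: "\<And>i i'. i < n \<Longrightarrow> i' < n \<Longrightarrow> dist_rows T l i i' \<le> 3"
    and v: "v < n" and w: "w < n" and dist_v_w: "dist_rows T l v w = 3"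
begin

lemma card_Dset_Diff_le_1:
  assumes "x < n"
  shows "card (Dset T l x v - Dset T l v w) \<le> 1"
  using dist_rows_add_dist_rows[of T l x v w] dist_le[of x v] dist_le[of x w] assms v w dist_v_w
  by linarith

lemma card_T3_wrt_Diff_le_1:
  assumes "D \<in> T3_wrt T n l v \<union> T3_wrt T n l w"
  shows "card (D - Dset T l v w) \<le> 1"
proof -
  obtain x where "x < n" "D = Dset T l x v \<or> D = Dset T l x w"
    using assms unfolding T3_wrt_def by auto
  then have "D - Dset T l v w = Dset T l x v - Dset T l v w"
    using Dset_Diff_Dset_eq[of T l x v w] by blast
  then show ?thesis
    using card_Dset_Diff_le_1[OF \<open>x < n\<close>] by simp
qed

lemma dirty_col_in_T3_wrt:
  assumes "dirty_col T n j" "j < l" "j \<notin> Dset T l v w"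
  shows "\<exists>D \<in> T3_wrt T n l v \<union> T3_wrt T n l w. j \<in> D"
proof -
  obtain a b where "a < n" "b < n" "T a j \<noteq> T b j"
    using assms(1) unfolding dirty_col_def by blast
  then obtain x where x: "x < n" "T x j \<noteq> T v j"
    by (cases "T a j = T v j") blast+
  then have j_outside: "j \<in> Dset T l x v - Dset T l v w"
    using assms(2,3) unfolding Dset_def by simp
  then have "card (Dset T l x v - Dset T l v w) \<noteq> 0"
    using finite_Dset by (metis card_0_eq empty_iff finite_Diff)
  then have "dist_rows T l x v = 3 \<or> dist_rows T l x w = 3"
    using dist_rows_add_dist_rows[of T l x v w] dist_le[of x v] dist_le[of x w] x(1) v w dist_v_w
    by linarith
  moreover have "j \<in> Dset T l x v" "j \<in> Dset T l x w"
    using j_outside Dset_Diff_Dset_eq[of T l x v w] by auto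
  moreover have "x \<noteq> u" if "dist_rows T l x u = 3" for u
    using that by (auto simp: dist_rows_def Dset_self)
  ultimately show ?thesis
    unfolding T3_wrt_def using x(1) by blast
qed

lemma card_T3_wrt_add_card_T3_wrt_ge:
  assumes "\<forall>j<l. dirty_col T n j"
  shows "l - 3 \<le> card (T3_wrt T n l v) + card (T3_wrt T n l w)"
proof -
  let ?P = "Dset T l v w" and ?S = "T3_wrt T n l v \<union> T3_wrt T n l w"
  have "?P \<subseteq> {0..<l}"
    unfolding Dset_def by auto
  then have "l - 3 = card ({0..<l} - ?P)"
    using dist_v_w card_Diff_subset[OF finite_Dset] by (simp add: dist_rows_def)
  also have "\<dots> \<le> card (\<Union>D \<in> ?S. D - ?P)"
  proof (rule card_mono)
    show "finite (\<Union>D \<in> ?S. D - ?P)"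
      using finite_T3_wrt by (auto simp: T3_wrt_def finite_Dset)
    show "{0..<l} - ?P \<subseteq> (\<Union>D \<in> ?S. D - ?P)"
      using dirty_col_in_T3_wrt assms by fastforce
  qed
  also have "\<dots> \<le> (\<Sum>D \<in> ?S. card (D - ?P))"
    using finite_T3_wrt by (intro card_UN_le) simp
  also have "\<dots> \<le> card ?S"
    using sum_bounded_above[of ?S "\<lambda>D. card (D - ?P)" 1] card_T3_wrt_Diff_le_1 by simp
  also have "\<dots> \<le> card (T3_wrt T n l v) + card (T3_wrt T n l w)"
    by (rule card_Un_le)
  finally show ?thesis .
qed

end

theorem lemma15:
  fixes T :: "nat \<Rightarrow> nat \<Rightarrow> bool" and n l :: nat
  assumes "l \<ge> 14"
    and "\<forall>j<l. dirty_col T n j"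
    and "delta T n l = 3"
  shows "\<exists>\<sigma>. \<sigma> permutes {0..<n} \<and> card (T3 (\<lambda>i. T (\<sigma> i)) n l) \<ge> 5"
proof -
  have dist_le: "dist_rows T l i i' \<le> 3" if "i < n" "i' < n" for i i'
    using dist_rows_le_delta[OF that, of T l] assms(3) by simp
  have "dirty_col T n 0"
    using assms(1,2) by simp
  then obtain i i' where "i < n" "i' < n" "T i 0 \<noteq> T i' 0"
    unfolding dirty_col_def by blast
  then obtain v w where vw: "v < n" "w < n" "dist_rows T l v w = 3"
    using delta_attained[of i n i' T l] unfolding assms(3) by blast
  have "11 \<le> card (T3_wrt T n l v) + card (T3_wrt T n l w)"
    using card_T3_wrt_add_card_T3_wrt_ge[OF dist_le vw assms(2)] assms(1) by linarith
  then have "5 \<le> card (T3_wrt T n l v) \<or> 5 \<le> card (T3_wrt T n l w)"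
    by linarith
  then obtain u where "u < n" "5 \<le> card (T3_wrt T n l u)"
    using vw(1,2) by blast
  then show ?thesis
    using exists_permutation_T3_eq_T3_wrt by metis
qed

end
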